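(* Let $n,m,k$ be even with $n=m+k$, let $h:\mathbb F_2^m\to\mathbb F_2$ and $g:\mathbb F_2^k\to\mathbb F_2$ be bent functions, let $H\subset\mathbb F_2^m$ be a linear subspace of codimension $1$, and $\overline H=\mathbb F_2^m\setminus H$. Let $E_1=\mathbb F_2^k\times H$ and $E_2=\{\mathbf 0_k\}\times\overline H$. Define $W:\mathbb F_2^k\times\mathbb F_2^m\to\mathbb Z$ by $W(\alpha,\beta)=(-1)^{g(\alpha)\oplus h(\beta)}2^{n/2}$ for $(\alpha,\beta)\in E_1$, $W(\alpha,\beta)=(-1)^{h(\beta)}2^{m/2+k}$ for $(\alpha,\beta)\in E_2$, and $W(\alpha,\beta)=0$ otherwise. Then $W$ is the Walsh spectrum of a Boolean function $f:\mathbb F_2^n\to\mathbb F_2$. Moreover, the functions $f_1:E_1\to\mathbb F_2$, $f_1(\alpha,\beta)=g(\alpha)\oplus h(\beta)$, and $f_2:E_2\to\mathbb F_2$, $f_2(\alpha,\beta)=h(\beta)$, are totally disjoint spectra functions.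
   Context: $W_f(\omega)=\sum_x(-1)^{f(x)\oplus\omega\cdot x}$; for even $m$, $h$ is bent if $|W_h(\omega)|=2^{m/2}$ for all $\omega$. Totally disjoint spectra functions: for disjoint $S^{[1]},S^{[2]}\subset\mathbb F_2^n$ and functions $f_i:S^{[i]}\to\mathbb F_2$, put $X_i(u)=\sum_{\omega\in S^{[i]}}(-1)^{f_i(\omega)\oplus u\cdot\omega}$; the pair is totally disjoint spectra if $X_1(u)X_2(u)=0$ and $|X_1(u)|+|X_2(u)|>0$ for all $u\in\mathbb F_2^n$. *)

theory Defs
  imports Main
begin

text \<open>Vectors of F_2^n are Boolean lists of length n; addition is XOR, F_2 values are bool.
  A pair (alpha, beta) in F_2^k x F_2^m is identified with the concatenation alpha @ beta in F_2^(k+m).\<close>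

definition vecs :: "nat \<Rightarrow> bool list set" where
  "vecs n = {xs. length xs = n}"

definition vadd :: "bool list \<Rightarrow> bool list \<Rightarrow> bool list" where
  "vadd xs ys = map2 (\<noteq>) xs ys"

definition dotp :: "bool list \<Rightarrow> bool list \<Rightarrow> bool" where
  "dotp xs ys = odd (length (filter id (map2 (\<and>) xs ys)))"

definition sgn2 :: "bool \<Rightarrow> int" where
  "sgn2 b = (if b then -1 else 1)"

definition walsh :: "nat \<Rightarrow> (bool list \<Rightarrow> bool) \<Rightarrow> bool list \<Rightarrow> int" where
  "walsh n f \<omega> = (\<Sum>x\<in>vecs n. sgn2 (f x \<noteq> dotp \<omega> x))"

definition bent :: "nat \<Rightarrow> (bool list \<Rightarrow> bool) \<Rightarrow> bool" where
  "bent m h \<longleftrightarrow> (\<forall>\<omega>\<in>vecs m. \<bar>walsh m h \<omega>\<bar> = 2 ^ (m div 2))"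

definition lin_subspace :: "nat \<Rightarrow> bool list set \<Rightarrow> bool" where
  "lin_subspace m H \<longleftrightarrow> H \<subseteq> vecs m \<and> replicate m False \<in> H \<and>
     (\<forall>x\<in>H. \<forall>y\<in>H. vadd x y \<in> H)"

definition codim1_subspace :: "nat \<Rightarrow> bool list set \<Rightarrow> bool" where
  "codim1_subspace m H \<longleftrightarrow> lin_subspace m H \<and> m \<ge> 1 \<and> card H = 2 ^ (m - 1)"

definition Xsum :: "bool list set \<Rightarrow> (bool list \<Rightarrow> bool) \<Rightarrow> bool list \<Rightarrow> int" where
  "Xsum S f u = (\<Sum>\<omega>\<in>S. sgn2 (f \<omega> \<noteq> dotp u \<omega>))"

definition tds :: "nat \<Rightarrow> bool list set \<Rightarrow> (bool list \<Rightarrow> bool) \<Rightarrow> bool list set \<Rightarrow> (bool list \<Rightarrow> bool) \<Rightarrow> bool" where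
  "tds n S1 f1 S2 f2 \<longleftrightarrow> S1 \<subseteq> vecs n \<and> S2 \<subseteq> vecs n \<and> S1 \<inter> S2 = {} \<and>
     (\<forall>u\<in>vecs n. Xsum S1 f1 u * Xsum S2 f2 u = 0 \<and> \<bar>Xsum S1 f1 u\<bar> + \<bar>Xsum S2 f2 u\<bar> > 0)"

end

theory Submission
  imports Defs
begin

text \<open>Let X(b) and X'(b) be the Walsh sums of h restricted to H and to its complement.
  Since H is the kernel of a linear form x \<mapsto> c\<cdot>x, we have X(b) + X'(b) = W_h(b) and
  X(b) - X'(b) = W_h(b + c), both \<plusminus>2^(m/2); so one of X(b), X'(b) vanishes and the other has
  modulus 2^(m/2). The restricted sums of f1 and f2 at (a, b) are W_g(a) X(b) and X'(b), which gives
  total disjointness, and the inverse transform of W at (a, b), namely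
  2^(n/2) W_g(a) X(b) + 2^(m/2+k) X'(b), has constant modulus 2^n. Its signs therefore define a
  Boolean function with spectrum W.\<close>

section \<open>Arithmetic of \<open>F\<^sub>2\<^sup>n\<close> on Boolean lists\<close>

lemma mem_vecs [simp]: "x \<in> vecs n \<longleftrightarrow> length x = n"
  by (simp add: vecs_def)

lemma sgn2_xor: "sgn2 (a \<noteq> b) = sgn2 a * sgn2 b"
  by (simp add: sgn2_def)

lemma dotp_Nil1 [simp]: "dotp [] y = False"
  by (simp add: dotp_def)

lemma dotp_Nil2 [simp]: "dotp x [] = False"
  by (simp add: dotp_def)

lemma dotp_Cons [simp]: "dotp (a # x) (b # y) = ((a \<and> b) \<noteq> dotp x y)"
  by (cases "a \<and> b") (auto simp add: dotp_def)

lemma vadd_Nil1 [simp]: "vadd [] y = []"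
  by (simp add: vadd_def)

lemma vadd_Nil2 [simp]: "vadd x [] = []"
  by (simp add: vadd_def)

lemma vadd_Cons [simp]: "vadd (a # x) (b # y) = (a \<noteq> b) # vadd x y"
  by (simp add: vadd_def)

lemma length_vadd [simp]: "length (vadd x y) = min (length x) (length y)"
  by (simp add: vadd_def)

lemma dotp_commute: "dotp x y = dotp y x"
proof (induction x arbitrary: y)
  case (Cons a x)
  then show ?case by (cases y) auto
qed simp

lemma dotp_append:
  "length a = length \<alpha> \<Longrightarrow> dotp (\<alpha> @ \<beta>) (a @ b) = (dotp \<alpha> a \<noteq> dotp \<beta> b)"
  by (induction \<alpha> arbitrary: a) (auto simp: length_Suc_conv)

lemma dotp_vadd_left:
  "length x = length y \<Longrightarrow> dotp (vadd x y) z = (dotp x z \<noteq> dotp y z)"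
proof (induction x arbitrary: y z)
  case (Cons a x)
  then show ?case by (cases y; cases z) auto
qed simp

lemma dotp_replicate_False_left [simp]: "dotp (replicate n False) z = False"
proof (induction n arbitrary: z)
  case (Suc n)
  then show ?case by (cases z) auto
qed simp

lemma dotp_replicate_False_right [simp]: "dotp z (replicate n False) = False"
  by (metis dotp_replicate_False_left dotp_commute)

lemma vadd_vadd_cancel: "length x = length y \<Longrightarrow> vadd x (vadd x y) = y"
proof (induction x arbitrary: y)
  case (Cons a x)
  then show ?case by (cases y) auto
qed simp

lemma vadd_commute: "vadd x y = vadd y x"
proof (induction x arbitrary: y)
  case (Cons a x)
  then show ?case by (cases y) auto
qed simp

lemma vadd_replicate_False: "length x = n \<Longrightarrow> vadd (replicate n False) x = x"
  by (induction x arbitrary: n) auto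

lemma vadd_eq_zero_iff:
  "length x = length y \<Longrightarrow> vadd x y = replicate (length x) False \<longleftrightarrow> x = y"
proof (induction x arbitrary: y)
  case (Cons a x)
  then show ?case by (cases y) auto
qed simp

lemma vecs_0: "vecs 0 = {[]}"
  by (auto simp: vecs_def)

lemma vecs_Suc: "vecs (Suc n) = (Cons False) ` vecs n \<union> (Cons True) ` vecs n"
  by (auto simp: vecs_def length_Suc_conv image_def)

lemma finite_vecs [simp]: "finite (vecs n)"
  by (induction n) (auto simp: vecs_0 vecs_Suc)

lemma sum_vecs_Suc:
  "sum f (vecs (Suc n)) = (\<Sum>x\<in>vecs n. f (False # x)) + (\<Sum>x\<in>vecs n. f (True # x))"
  unfolding vecs_Suc by (subst sum.union_disjoint) (auto simp: sum.reindex)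

lemma card_vecs: "card (vecs n) = 2 ^ n"
proof (induction n)
  case (Suc n)
  have "card (vecs (Suc n)) = (\<Sum>x\<in>vecs (Suc n). 1)"
    by simp
  also have "\<dots> = 2 * card (vecs n)"
    by (subst sum_vecs_Suc) simp
  finally show ?case
    using Suc by simp
qed (simp add: vecs_0)

section \<open>Characters and Walsh inversion\<close>

lemma sum_sgn2_dotp:
  "\<omega> \<in> vecs n \<Longrightarrow> (\<Sum>x\<in>vecs n. sgn2 (dotp \<omega> x)) = (if \<omega> = replicate n False then 2 ^ n else 0)"
proof (induction n arbitrary: \<omega>)
  case (Suc n)
  then obtain a w where w: "\<omega> = a # w" "w \<in> vecs n"
    by (auto simp: length_Suc_conv)
  have "(\<Sum>x\<in>vecs (Suc n). sgn2 (dotp \<omega> x))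
      = (\<Sum>x\<in>vecs n. sgn2 (dotp w x)) + (\<Sum>x\<in>vecs n. sgn2 a * sgn2 (dotp w x))"
    by (subst sum_vecs_Suc) (simp add: w flip: sgn2_xor)
  also have "\<dots> = (1 + sgn2 a) * (\<Sum>x\<in>vecs n. sgn2 (dotp w x))"
    by (simp add: sum_distrib_left sum.distrib algebra_simps)
  finally show ?case
    using Suc.IH[OF w(2)] w by (auto simp: sgn2_def)
qed (simp add: vecs_0 sgn2_def)

lemma walsh_eq_Xsum: "walsh n f = Xsum (vecs n) f"
  by (simp add: fun_eq_iff walsh_def Xsum_def)

lemma walsh_inversion:
  assumes inv: "\<And>x. x \<in> vecs n \<Longrightarrow> (\<Sum>\<nu>\<in>vecs n. F \<nu> * sgn2 (dotp \<nu> x)) = 2 ^ n * sgn2 (f x)"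
    and \<omega>: "\<omega> \<in> vecs n"
  shows "walsh n f \<omega> = F \<omega>"
proof -
  have char_mult: "sgn2 (dotp \<nu> x) * sgn2 (dotp \<omega> x) = sgn2 (dotp (vadd \<nu> \<omega>) x)"
    if "\<nu> \<in> vecs n" for \<nu> x
    using that \<omega> by (simp add: dotp_vadd_left sgn2_def)
  have "2 ^ n * walsh n f \<omega> = (\<Sum>x\<in>vecs n. 2 ^ n * sgn2 (f x) * sgn2 (dotp \<omega> x))"
    unfolding walsh_def sgn2_xor by (simp add: sum_distrib_left mult.assoc)
  also have "\<dots> = (\<Sum>x\<in>vecs n. \<Sum>\<nu>\<in>vecs n. F \<nu> * (sgn2 (dotp \<nu> x) * sgn2 (dotp \<omega> x)))"
    by (intro sum.cong refl) (simp add: sum_distrib_right mult.assoc flip: inv)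
  also have "\<dots> = (\<Sum>\<nu>\<in>vecs n. F \<nu> * (\<Sum>x\<in>vecs n. sgn2 (dotp (vadd \<nu> \<omega>) x)))"
    by (subst sum.swap) (simp add: sum_distrib_left char_mult)
  also have "\<dots> = (\<Sum>\<nu>\<in>vecs n. if \<nu> = \<omega> then F \<nu> * 2 ^ n else 0)"
  proof (intro sum.cong refl)
    fix \<nu> assume "\<nu> \<in> vecs n"
    then have "vadd \<nu> \<omega> = replicate n False \<longleftrightarrow> \<nu> = \<omega>"
      using \<omega> vadd_eq_zero_iff[of \<nu> \<omega>] by simp
    with \<open>\<nu> \<in> vecs n\<close> \<omega> show "F \<nu> * (\<Sum>x\<in>vecs n. sgn2 (dotp (vadd \<nu> \<omega>) x))
        = (if \<nu> = \<omega> then F \<nu> * 2 ^ n else 0)"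
      by (simp add: sum_sgn2_dotp)
  qed
  also have "\<dots> = F \<omega> * 2 ^ n"
    using \<omega> by simp
  finally show ?thesis
    by simp
qed

lemma walsh_spectrum_exists:
  assumes "\<And>x. x \<in> vecs n \<Longrightarrow> \<bar>\<Sum>\<nu>\<in>vecs n. F \<nu> * sgn2 (dotp \<nu> x)\<bar> = 2 ^ n"
  shows "\<exists>f. \<forall>\<omega>\<in>vecs n. walsh n f \<omega> = F \<omega>"
proof -
  define f where "f x \<longleftrightarrow> (\<Sum>\<nu>\<in>vecs n. F \<nu> * sgn2 (dotp \<nu> x)) < 0" for x
  have "(\<Sum>\<nu>\<in>vecs n. F \<nu> * sgn2 (dotp \<nu> x)) = 2 ^ n * sgn2 (f x)" if "x \<in> vecs n" for x
    using assms[OF that] unfolding f_def sgn2_def by (auto simp: abs_if split: if_splits)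
  then show ?thesis
    using walsh_inversion by blast
qed

section \<open>Hyperplanes\<close>

lemma additive_eq_dotp:
  assumes "\<And>x y. x \<in> vecs m \<Longrightarrow> y \<in> vecs m \<Longrightarrow> P (vadd x y) = (P x \<noteq> P y)"
  shows "\<exists>c\<in>vecs m. \<forall>x\<in>vecs m. P x = dotp c x"
  using assms
proof (induction m arbitrary: P)
  case 0
  then have "P [] = (P [] \<noteq> P [])"
    by (auto simp: vecs_0)
  then show ?case
    by (auto simp: vecs_0)
next
  case (Suc m)
  have "\<exists>c'\<in>vecs m. \<forall>x\<in>vecs m. P (False # x) = dotp c' x"
    using Suc.prems[of "False # x" "False # y" for x y] by (intro Suc.IH) auto
  then obtain c' where c': "c' \<in> vecs m" "\<And>x. x \<in> vecs m \<Longrightarrow> P (False # x) = dotp c' x"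
    by blast
  define e where "e = True # replicate m False"
  have "P (b # x) = dotp (P e # c') (b # x)" if "x \<in> vecs m" for b x
  proof (cases b)
    case True
    then show ?thesis
      using Suc.prems[of e "False # x"] that c' by (simp add: e_def vadd_replicate_False)
  qed (use that c' in simp)
  then show ?case
    using c'(1) by (intro bexI[of _ "P e # c'"]) (auto simp: length_Suc_conv simp del: dotp_Cons)
qed

lemma lin_subspace_vadd_notin:
  assumes "lin_subspace m H" "a \<in> H" "b \<in> vecs m - H"
  shows "vadd a b \<notin> H"
proof
  assume "vadd a b \<in> H"
  with assms have "vadd a (vadd a b) \<in> H"
    by (auto simp: lin_subspace_def)
  moreover have "length a = length b"
    using assms by (auto simp: lin_subspace_def)
  ultimately show False
    using assms(3) by (simp add: vadd_vadd_cancel)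
qed

text \<open>Both \<open>H\<close> and its complement have \<open>2\<^sup>m\<^sup>-\<^sup>1\<close> elements, so the injective
  translate of \<open>H\<close> into the complement is onto.\<close>

lemma codim1_translate_eq_complement:
  assumes H: "codim1_subspace m H" and x: "x \<in> vecs m - H"
  shows "vadd x ` H = vecs m - H"
proof (rule card_subset_eq)
  have sub: "H \<subseteq> vecs m" and card_H: "card H = 2 ^ (m - 1)" and "m \<ge> 1"
    using H by (auto simp: codim1_subspace_def lin_subspace_def)
  show "finite (vecs m - H)"
    by simp
  show "vadd x ` H \<subseteq> vecs m - H"
    using lin_subspace_vadd_notin[of m H _ x] H x sub
    by (auto simp: codim1_subspace_def vadd_commute)
  have "inj_on (vadd x) H"
    using sub x by (intro inj_on_inverseI[of _ "vadd x"]) (auto simp: vadd_vadd_cancel)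
  then have "card (vadd x ` H) = 2 ^ (m - 1)"
    by (simp add: card_image card_H)
  moreover have "card (vecs m - H) = 2 ^ m - 2 ^ (m - 1)"
    using sub card_H by (simp add: card_Diff_subset finite_subset card_vecs)
  moreover have "(2::nat) ^ m - 2 ^ (m - 1) = 2 ^ (m - 1)"
    using \<open>m \<ge> 1\<close> by (cases m) auto
  ultimately show "card (vadd x ` H) = card (vecs m - H)"
    by simp
qed

lemma codim1_complement_additive:
  assumes H: "codim1_subspace m H" and "x \<in> vecs m" "y \<in> vecs m"
  shows "(vadd x y \<notin> H) = ((x \<notin> H) \<noteq> (y \<notin> H))"
proof -
  have lin: "lin_subspace m H"
    using H by (simp add: codim1_subspace_def)
  consider "x \<in> H" "y \<in> H" | "x \<in> H" "y \<notin> H" | "x \<notin> H" "y \<in> H" | "x \<notin> H" "y \<notin> H"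
    by blast
  then show ?thesis
  proof cases
    case 1
    then show ?thesis
      using lin by (simp add: lin_subspace_def)
  next
    case 2
    then show ?thesis
      using lin_subspace_vadd_notin[OF lin, of x y] assms by simp
  next
    case 3
    then show ?thesis
      using lin_subspace_vadd_notin[OF lin, of y x] assms by (simp add: vadd_commute)
  next
    case 4
    then obtain a where "a \<in> H" "y = vadd x a"
      using codim1_translate_eq_complement[OF H, of x] assms by blast
    moreover have "length a = length x"
      using \<open>a \<in> H\<close> assms lin by (auto simp: lin_subspace_def)
    ultimately show ?thesis
      using 4 by (simp add: vadd_vadd_cancel)
  qed
qed

lemma codim1_subspace_eq_dotp:
  "codim1_subspace m H \<Longrightarrow> \<exists>c\<in>vecs m. \<forall>x\<in>vecs m. (x \<notin> H) = dotp c x"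
  by (rule additive_eq_dotp) (rule codim1_complement_additive)

section \<open>Walsh sums restricted to a hyperplane\<close>

lemma abs_add_diff_eq_cases:
  fixes x y :: int
  assumes "\<bar>x + y\<bar> = M" "\<bar>x - y\<bar> = M"
  shows "x = 0 \<and> \<bar>y\<bar> = M \<or> y = 0 \<and> \<bar>x\<bar> = M"
  using assms by (auto simp: abs_if split: if_splits)

lemma Xsum_vadd:
  "length b = length c \<Longrightarrow>
    Xsum S f (vadd b c) = (\<Sum>\<omega>\<in>S. sgn2 (dotp c \<omega>) * sgn2 (f \<omega> \<noteq> dotp b \<omega>))"
  unfolding Xsum_def by (intro sum.cong refl) (auto simp: dotp_vadd_left sgn2_def)

lemma bent_Xsum_codim1_cases:
  assumes h: "bent m h" and H: "codim1_subspace m H" and b: "b \<in> vecs m"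
  shows "Xsum H h b = 0 \<and> \<bar>Xsum (vecs m - H) h b\<bar> = 2 ^ (m div 2)
    \<or> Xsum (vecs m - H) h b = 0 \<and> \<bar>Xsum H h b\<bar> = 2 ^ (m div 2)"
proof -
  obtain c where c: "c \<in> vecs m" "\<And>x. x \<in> vecs m \<Longrightarrow> (x \<notin> H) = dotp c x"
    using codim1_subspace_eq_dotp[OF H] by blast
  have sub: "H \<subseteq> vecs m"
    using H by (simp add: codim1_subspace_def lin_subspace_def)
  have split: "(\<Sum>\<omega>\<in>vecs m. F \<omega>) = (\<Sum>\<omega>\<in>vecs m - H. F \<omega>) + (\<Sum>\<omega>\<in>H. F \<omega>)" for F :: "_ \<Rightarrow> int"
    by (rule sum.subset_diff[OF sub finite_vecs])
  have plus: "Xsum H h b + Xsum (vecs m - H) h b = walsh m h b"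
    unfolding walsh_eq_Xsum Xsum_def split by simp
  have "walsh m h (vadd b c) = (\<Sum>\<omega>\<in>vecs m. sgn2 (dotp c \<omega>) * sgn2 (h \<omega> \<noteq> dotp b \<omega>))"
    using b c by (simp add: walsh_eq_Xsum Xsum_vadd)
  also have "\<dots> = - Xsum (vecs m - H) h b + Xsum H h b"
  proof -
    have normal: "dotp c \<omega> \<longleftrightarrow> \<omega> \<notin> H" if "\<omega> \<in> vecs m" for \<omega>
      using c that by blast
    have "(\<Sum>\<omega>\<in>vecs m - H. sgn2 (dotp c \<omega>) * sgn2 (h \<omega> \<noteq> dotp b \<omega>)) = - Xsum (vecs m - H) h b"
      unfolding Xsum_def sum_negf[symmetric] by (intro sum.cong) (auto simp: normal sgn2_def)
    moreover have "(\<Sum>\<omega>\<in>H. sgn2 (dotp c \<omega>) * sgn2 (h \<omega> \<noteq> dotp b \<omega>)) = Xsum H h b"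
      unfolding Xsum_def using sub by (intro sum.cong) (auto simp: normal sgn2_def)
    ultimately show ?thesis
      by (simp only: split)
  qed
  finally have minus: "Xsum H h b - Xsum (vecs m - H) h b = walsh m h (vadd b c)"
    by simp
  have "\<bar>walsh m h b\<bar> = 2 ^ (m div 2)" "\<bar>walsh m h (vadd b c)\<bar> = 2 ^ (m div 2)"
    using h b c by (simp_all add: bent_def)
  then show ?thesis
    using abs_add_diff_eq_cases plus minus by metis
qed

section \<open>Concatenated supports\<close>

definition cat_set :: "bool list set \<Rightarrow> bool list set \<Rightarrow> bool list set" where
  "cat_set A B = {\<alpha> @ \<beta> | \<alpha> \<beta>. \<alpha> \<in> A \<and> \<beta> \<in> B}"

lemma append_mem_cat_set_iff:
  "A \<subseteq> vecs (length \<alpha>) \<Longrightarrow> \<alpha> @ \<beta> \<in> cat_set A B \<longleftrightarrow> \<alpha> \<in> A \<and> \<beta> \<in> B"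
  by (auto simp: cat_set_def subset_iff)

lemma sum_cat_set:
  assumes "A \<subseteq> vecs k"
  shows "(\<Sum>x\<in>cat_set A B. F x) = (\<Sum>\<alpha>\<in>A. \<Sum>\<beta>\<in>B. F (\<alpha> @ \<beta>))"
proof -
  have "cat_set A B = (\<lambda>(\<alpha>, \<beta>). \<alpha> @ \<beta>) ` (A \<times> B)"
    by (auto simp: cat_set_def)
  moreover have "inj_on (\<lambda>(\<alpha>, \<beta>). \<alpha> @ \<beta>) (A \<times> B)"
    using assms by (auto simp: inj_on_def subset_iff)
  ultimately show ?thesis
    by (simp add: sum.reindex sum.cartesian_product split_def)
qed

lemma Xsum_cat_set:
  assumes "A \<subseteq> vecs k" "length a = k"
  shows "Xsum (cat_set A B) (\<lambda>x. f1 (take k x) \<noteq> f2 (drop k x)) (a @ b) = Xsum A f1 a * Xsum B f2 b"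
proof -
  have "sgn2 ((f1 \<alpha> \<noteq> f2 \<beta>) \<noteq> dotp (a @ b) (\<alpha> @ \<beta>))
      = sgn2 (f1 \<alpha> \<noteq> dotp a \<alpha>) * sgn2 (f2 \<beta> \<noteq> dotp b \<beta>)" if "\<alpha> \<in> A" for \<alpha> \<beta>
    using that assms by (auto simp: dotp_append sgn2_def subset_iff)
  moreover have "take k (\<alpha> @ \<beta>) = \<alpha>" "drop k (\<alpha> @ \<beta>) = \<beta>" if "\<alpha> \<in> A" for \<alpha> \<beta>
    using that assms by (auto simp: subset_iff)
  ultimately show ?thesis
    unfolding Xsum_def sum_cat_set[OF assms(1)] sum_product by (simp cong: sum.cong)
qed

definition two_piece_spectrum ::
    "bool list set \<Rightarrow> int \<Rightarrow> (bool list \<Rightarrow> bool) \<Rightarrow> bool list set \<Rightarrow> int \<Rightarrow> (bool list \<Rightarrow> bool)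
      \<Rightarrow> bool list \<Rightarrow> int" where
  "two_piece_spectrum S1 c1 f1 S2 c2 f2 \<nu> =
    (if \<nu> \<in> S1 then c1 * sgn2 (f1 \<nu>) else if \<nu> \<in> S2 then c2 * sgn2 (f2 \<nu>) else 0)"

lemma sum_two_piece_spectrum_sgn2_dotp:
  assumes "S1 \<subseteq> vecs n" "S2 \<subseteq> vecs n" "S1 \<inter> S2 = {}"
  shows "(\<Sum>\<nu>\<in>vecs n. two_piece_spectrum S1 c1 f1 S2 c2 f2 \<nu> * sgn2 (dotp \<nu> x))
      = c1 * Xsum S1 f1 x + c2 * Xsum S2 f2 x"
proof -
  have restrict: "(\<Sum>\<nu>\<in>vecs n. if \<nu> \<in> S then F \<nu> else 0) = sum F S" if "S \<subseteq> vecs n" for S F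
    using that by (simp add: sum.inter_restrict[symmetric] Int_absorb1)
  have "(\<Sum>\<nu>\<in>vecs n. two_piece_spectrum S1 c1 f1 S2 c2 f2 \<nu> * sgn2 (dotp \<nu> x))
    = (\<Sum>\<nu>\<in>vecs n. if \<nu> \<in> S1 then c1 * sgn2 (f1 \<nu> \<noteq> dotp x \<nu>) else 0)
      + (\<Sum>\<nu>\<in>vecs n. if \<nu> \<in> S2 then c2 * sgn2 (f2 \<nu> \<noteq> dotp x \<nu>) else 0)"
    using assms(3) unfolding sum.distrib[symmetric] two_piece_spectrum_def
    by (intro sum.cong refl) (auto simp: sgn2_def dotp_commute)
  then show ?thesis
    using assms by (simp add: restrict Xsum_def sum_distrib_left)
qed

lemma two_piece_spectrum_is_walsh:
  assumes "S1 \<subseteq> vecs n" "S2 \<subseteq> vecs n" "S1 \<inter> S2 = {}"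
    and "\<And>u. u \<in> vecs n \<Longrightarrow> \<bar>c1 * Xsum S1 f1 u + c2 * Xsum S2 f2 u\<bar> = 2 ^ n"
  shows "\<exists>f. \<forall>\<omega>\<in>vecs n. walsh n f \<omega> = two_piece_spectrum S1 c1 f1 S2 c2 f2 \<omega>"
  using assms by (intro walsh_spectrum_exists) (simp add: sum_two_piece_spectrum_sgn2_dotp)

lemma construction_Xsum_cases:
  assumes h: "bent m h" and g: "bent k g" and H: "codim1_subspace m H" and u: "u \<in> vecs (k + m)"
  defines "X1 \<equiv> Xsum (cat_set (vecs k) H) (\<lambda>x. g (take k x) \<noteq> h (drop k x)) u"
    and "X2 \<equiv> Xsum (cat_set {replicate k False} (vecs m - H)) (\<lambda>x. h (drop k x)) u"
  shows "X1 = 0 \<and> \<bar>X2\<bar> = 2 ^ (m div 2) \<or> X2 = 0 \<and> \<bar>X1\<bar> = 2 ^ (k div 2) * 2 ^ (m div 2)"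
proof -
  define a b where "a = take k u" and "b = drop k u"
  have u_eq: "u = a @ b" and a: "a \<in> vecs k" and b: "b \<in> vecs m"
    using u by (auto simp: a_def b_def)
  have "X1 = walsh k g a * Xsum H h b"
    unfolding X1_def u_eq walsh_eq_Xsum using a by (intro Xsum_cat_set) auto
  moreover have "X2 = Xsum {replicate k False} (\<lambda>_. False) a * Xsum (vecs m - H) h b"
    unfolding X2_def u_eq using a by (subst Xsum_cat_set[symmetric]) auto
  moreover have "Xsum {replicate k False} (\<lambda>_. False) a = 1"
    by (simp add: Xsum_def sgn2_def)
  moreover have "\<bar>walsh k g a\<bar> = 2 ^ (k div 2)"
    using g a by (simp add: bent_def)
  ultimately show ?thesis
    using bent_Xsum_codim1_cases[OF h H b] by (auto simp: abs_mult)
qed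

lemma construction_inverse_modulus:
  assumes "even m" "even k" "bent m h" "bent k g" "codim1_subspace m H" "u \<in> vecs (k + m)"
  shows "\<bar>2 ^ ((k + m) div 2) * Xsum (cat_set (vecs k) H) (\<lambda>x. g (take k x) \<noteq> h (drop k x)) u
      + 2 ^ (m div 2 + k) * Xsum (cat_set {replicate k False} (vecs m - H)) (\<lambda>x. h (drop k x)) u\<bar>
    = (2::int) ^ (k + m)"
proof -
  have "(k + m) div 2 + (k div 2 + m div 2) = k + m" "m div 2 + k + m div 2 = k + m"
    using assms(1,2) by (auto elim!: evenE)
  then show ?thesis
    using construction_Xsum_cases[OF assms(3-6)] by (auto simp: abs_mult simp flip: power_add)
qed

theorem mainTheorem4:
  fixes n m k :: nat and h g :: "bool list \<Rightarrow> bool" and H :: "bool list set"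
    and W :: "bool list \<Rightarrow> bool list \<Rightarrow> int"
  assumes "even n" "even m" "even k" "n = m + k"
    and "bent m h" "bent k g"
    and "codim1_subspace m H"
    and W_def: "\<And>\<alpha> \<beta>. W \<alpha> \<beta> =
        (if \<alpha> \<in> vecs k \<and> \<beta> \<in> H then sgn2 (g \<alpha> \<noteq> h \<beta>) * 2 ^ (n div 2)
         else if \<alpha> = replicate k False \<and> \<beta> \<in> vecs m - H then sgn2 (h \<beta>) * 2 ^ (m div 2 + k)
         else 0)"
  shows "(\<exists>f :: bool list \<Rightarrow> bool. \<forall>\<alpha>\<in>vecs k. \<forall>\<beta>\<in>vecs m. walsh n f (\<alpha> @ \<beta>) = W \<alpha> \<beta>)
    \<and> tds n {\<alpha> @ \<beta> | \<alpha> \<beta>. \<alpha> \<in> vecs k \<and> \<beta> \<in> H} (\<lambda>x. g (take k x) \<noteq> h (drop k x))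
           {replicate k False @ \<beta> | \<beta>. \<beta> \<in> vecs m - H} (\<lambda>x. h (drop k x))"
proof -
  define E1 E2 f1 f2 where "E1 = cat_set (vecs k) H" and "E2 = cat_set {replicate k False} (vecs m - H)"
    and "f1 = (\<lambda>x. g (take k x) \<noteq> h (drop k x))" and "f2 = (\<lambda>x. h (drop k x))"
  have n: "n = k + m"
    using assms(4) by simp
  have "H \<subseteq> vecs m"
    using assms(7) by (simp add: codim1_subspace_def lin_subspace_def)
  then have supports: "E1 \<subseteq> vecs n" "E2 \<subseteq> vecs n" "E1 \<inter> E2 = {}"
    using n by (auto simp: E1_def E2_def cat_set_def)
  obtain f where f: "\<And>\<omega>. \<omega> \<in> vecs n \<Longrightarrow>
      walsh n f \<omega> = two_piece_spectrum E1 (2 ^ (n div 2)) f1 E2 (2 ^ (m div 2 + k)) f2 \<omega>"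
    using two_piece_spectrum_is_walsh[OF supports] construction_inverse_modulus[OF assms(2,3,5-7)]
    unfolding E1_def E2_def f1_def f2_def n by blast
  have "walsh n f (\<alpha> @ \<beta>) = W \<alpha> \<beta>" if "\<alpha> \<in> vecs k" "\<beta> \<in> vecs m" for \<alpha> \<beta>
  proof -
    have "\<alpha> @ \<beta> \<in> E1 \<longleftrightarrow> \<beta> \<in> H" "\<alpha> @ \<beta> \<in> E2 \<longleftrightarrow> \<alpha> = replicate k False \<and> \<beta> \<notin> H"
      using that by (simp_all add: E1_def E2_def append_mem_cat_set_iff)
    then show ?thesis
      using that f[of "\<alpha> @ \<beta>"] n by (simp add: W_def two_piece_spectrum_def f1_def f2_def)
  qed
  moreover have "tds n E1 f1 E2 f2"
    using supports construction_Xsum_cases[OF assms(5-7)]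
    unfolding tds_def E1_def E2_def f1_def f2_def n by fastforce
  moreover have "{\<alpha> @ \<beta> | \<alpha> \<beta>. \<alpha> \<in> vecs k \<and> \<beta> \<in> H} = E1"
    "{replicate k False @ \<beta> | \<beta>. \<beta> \<in> vecs m - H} = E2"
    by (auto simp: E1_def E2_def cat_set_def)
  ultimately show ?thesis
    unfolding f1_def f2_def by blast
qed

end
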